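(* Let $\mathrm{k}$ be an infinite field and $\mathcal{A}$ a unital associative $\mathrm{k}$-algebra satisfying $\mathbf{H}_{\mathrm{s}}$. Let $A$ be a finite subset of $\mathcal{A}$ with $A\cap U(\mathcal{A})\neq\emptyset$. Then the $\mathrm{k}$-subspace $\mathrm{k}\langle A\rangle$ admits a basis consisting of invertible elements of $\mathcal{A}$.
   Context: $U(\mathcal{A})$ is the group of invertible elements; $\mathrm{k}\langle A\rangle$ is the linear span of $A$. Hypothesis $\mathbf{H}_{\mathrm{s}}$: $\mathcal{A}$ is finite-dimensional over $\mathrm{k}$, or $\mathrm{k}\in\{\mathbb{R},\mathbb{C}\}$ and $\mathcal{A}$ is a Banach algebra over $\mathrm{k}$, or $\mathcal{A}$ is a finite product of field extensions of $\mathrm{k}$. *)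

theory Defs
  imports Complex_Main
begin

text \<open>A unital associative k-algebra: the ring structure of the type 'a (class ring_1,
 so 1 is the unit, associativity is built in) together with a scalar multiplication
 s making 'a a k-vector space, compatible with the multiplication.\<close>
definition k_algebra :: "('k::field \<Rightarrow> 'a::ring_1 \<Rightarrow> 'a) \<Rightarrow> bool" where
  "k_algebra s \<longleftrightarrow> vector_space s \<and>
     (\<forall>c x y. s c (x * y) = s c x * y \<and> s c (x * y) = x * s c y)"

definition units :: "'a::ring_1 set" where
  "units = {x. \<exists>y. x * y = 1 \<and> y * x = 1}"

definition fin_dim_alg :: "('k::field \<Rightarrow> 'a::ring_1 \<Rightarrow> 'a) \<Rightarrow> bool" where
  "fin_dim_alg s \<longleftrightarrow> (\<exists>B. finite_dimensional_vector_space s B)"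

text \<open>N is a complete submultiplicative norm on A, where the scalar field k carries
 the absolute value a (i.e. A is a Banach algebra over (k, a)).\<close>
definition banach_alg_norm ::
  "('k::field \<Rightarrow> 'a::ring_1 \<Rightarrow> 'a) \<Rightarrow> ('k \<Rightarrow> real) \<Rightarrow> ('a \<Rightarrow> real) \<Rightarrow> bool" where
  "banach_alg_norm s a N \<longleftrightarrow>
     (\<forall>x. N x = 0 \<longleftrightarrow> x = 0) \<and>
     (\<forall>x y. N (x + y) \<le> N x + N y) \<and>
     (\<forall>c x. N (s c x) = a c * N x) \<and>
     (\<forall>x y. N (x * y) \<le> N x * N y) \<and>
     (\<forall>X :: nat \<Rightarrow> 'a.
        (\<forall>e>0. \<exists>M. \<forall>m\<ge>M. \<forall>n\<ge>M. N (X m - X n) < e) \<longrightarrow>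
        (\<exists>L. \<forall>e>0. \<exists>M. \<forall>n\<ge>M. N (X n - L) < e))"

text \<open>k is (a copy of) R or C, identified via a field isomorphism phi, and A is a
 Banach algebra over it.\<close>
definition banach_over_R_or_C :: "('k::field \<Rightarrow> 'a::ring_1 \<Rightarrow> 'a) \<Rightarrow> bool" where
  "banach_over_R_or_C s \<longleftrightarrow>
     (\<exists>(\<phi>::'k \<Rightarrow> real) N. bij \<phi> \<and> (\<forall>x y. \<phi> (x + y) = \<phi> x + \<phi> y \<and> \<phi> (x * y) = \<phi> x * \<phi> y)
        \<and> banach_alg_norm s (\<lambda>c. \<bar>\<phi> c\<bar>) N) \<or>
     (\<exists>(\<phi>::'k \<Rightarrow> complex) N. bij \<phi> \<and> (\<forall>x y. \<phi> (x + y) = \<phi> x + \<phi> y \<and> \<phi> (x * y) = \<phi> x * \<phi> y)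
        \<and> banach_alg_norm s (\<lambda>c. cmod (\<phi> c)) N)"

text \<open>A is (isomorphic to) a finite product of field extensions of k: A is commutative
 and 1 is a sum of finitely many pairwise orthogonal nonzero idempotents e i such that each
 factor e i * A is a field with unit e i (it is then a field extension of k via c \<mapsto> s c (e i)).\<close>
definition fin_prod_field_ext :: "('k::field \<Rightarrow> 'a::ring_1 \<Rightarrow> 'a) \<Rightarrow> bool" where
  "fin_prod_field_ext s \<longleftrightarrow>
     (\<forall>x y :: 'a. x * y = y * x) \<and>
     (\<exists>(n::nat) (e::nat \<Rightarrow> 'a).
        (\<Sum>i<n. e i) = 1 \<and>
        (\<forall>i<n. \<forall>j<n. i \<noteq> j \<longrightarrow> e i * e j = 0) \<and>
        (\<forall>i<n. e i * e i = e i \<and> e i \<noteq> 0 \<and>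
           (\<forall>x. e i * x \<noteq> 0 \<longrightarrow> (\<exists>y. (e i * x) * (e i * y) = e i))))"

definition H_s :: "('k::field \<Rightarrow> 'a::ring_1 \<Rightarrow> 'a) \<Rightarrow> bool" where
  "H_s s \<longleftrightarrow> fin_dim_alg s \<or> banach_over_R_or_C s \<or> fin_prod_field_ext s"

end

theory Submission
  imports Defs "HOL-Computational_Algebra.Polynomial"
begin

(*
  Suppose every line through 1 contains a unit 1 + t y with t \<noteq> 0. Then so does every line
  through a unit u, as u + t v = u (1 + t u^-1 v). Extend {u} to a basis B of k<A> inside A and
  replace each v \<in> B - {u} by such a unit u + t_v v: the new vectors still span k<A> and are at
  most as many as B, so they form a basis of units.

  The hypothesis on lines holds under each alternative of H_s. In a finite-dimensional algebra y
  is annihilated by a nonzero polynomial p, and y - l is a unit as soon as p(l) \<noteq> 0, which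
  excludes finitely many l of the infinite field. In a Banach algebra 1 + t y is a unit by the
  Neumann series once |t| ||y|| < 1. In a finite product of fields 1 + t y is a unit unless one
  of its finitely many components vanishes, which happens for at most one t per component.
*)

lemma units_mult:
  assumes "x \<in> units" "y \<in> units"
  shows "x * y \<in> units"
proof -
  from assms obtain x' y' where "x * x' = 1" "x' * x = 1" "y * y' = 1" "y' * y = 1"
    by (auto simp: units_def)
  then have "(x * y) * (y' * x') = 1" "(y' * x') * (x * y) = 1"
    by (metis mult.assoc mult_1_left)+
  then show ?thesis by (auto simp: units_def)
qed

lemma units_if_left_right_inverse:
  assumes "x * y = 1" "z * x = 1"
  shows "x \<in> units"
proof -
  have "z = y" by (metis assms mult.assoc mult_1_left mult_1_right)
  then show ?thesis using assms by (auto simp: units_def)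
qed

lemma power_diff_power_factors:
  fixes x y :: "'a::ring_1"
  assumes "x * y = y * x"
  shows "\<exists>q r. x ^ n - y ^ n = (x - y) * q \<and> x ^ n - y ^ n = r * (x - y)"
proof (induction n)
  case (Suc n)
  then obtain q r where qr: "x ^ n - y ^ n = (x - y) * q" "x ^ n - y ^ n = r * (x - y)"
    by blast
  have commute: "x * (x - y) = (x - y) * x"
    using assms by (simp add: algebra_simps)
  have "x ^ Suc n - y ^ Suc n = x * (x ^ n - y ^ n) + (x - y) * y ^ n"
    by (simp add: algebra_simps)
  also have "\<dots> = (x - y) * (x * q + y ^ n)"
    by (simp add: qr(1) distrib_left flip: mult.assoc commute)
  finally have left: "x ^ Suc n - y ^ Suc n = (x - y) * (x * q + y ^ n)" .
  have "x ^ Suc n - y ^ Suc n = (x ^ n - y ^ n) * x + y ^ n * (x - y)"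
    using assms by (simp add: algebra_simps power_commutes power_commuting_commutes)
  also have "\<dots> = (r * x + y ^ n) * (x - y)"
    by (simp add: qr(2) distrib_right mult.assoc commute)
  finally show ?case
    using left by blast
qed (auto intro!: exI[of _ 0])

lemma one_minus_mult_geometric_sum:
  fixes x :: "'a::ring_1"
  shows "(1 - x) * (\<Sum>i<n. x ^ i) = 1 - x ^ n" "(\<Sum>i<n. x ^ i) * (1 - x) = 1 - x ^ n"
proof -
  show left: "(1 - x) * (\<Sum>i<n. x ^ i) = 1 - x ^ n"
  proof (induction n)
    case (Suc n)
    have "(1 - x) * (\<Sum>i<Suc n. x ^ i) = (1 - x) * (\<Sum>i<n. x ^ i) + (1 - x) * x ^ n"
      by (simp add: distrib_left)
    with Suc show ?case
      by (simp add: algebra_simps)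
  qed simp
  have "x * (\<Sum>i<n. x ^ i) = (\<Sum>i<n. x ^ i) * x"
    by (simp add: sum_distrib_left sum_distrib_right power_commutes)
  with left show "(\<Sum>i<n. x ^ i) * (1 - x) = 1 - x ^ n"
    by (simp add: algebra_simps)
qed

lemma unit_if_nonzero_idempotent_components:
  fixes e :: "nat \<Rightarrow> 'a::ring_1"
  assumes comm: "\<And>x y :: 'a. x * y = y * x"
    and sum_one: "(\<Sum>i<n. e i) = 1"
    and idem: "\<And>i. i < n \<Longrightarrow> e i * e i = e i"
    and field: "\<And>i x. i < n \<Longrightarrow> e i * x \<noteq> 0 \<Longrightarrow> \<exists>y. (e i * x) * (e i * y) = e i"
    and nonzero: "\<And>i. i < n \<Longrightarrow> e i * z \<noteq> 0"
  shows "z \<in> units"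
proof -
  have "\<forall>i. \<exists>y. i < n \<longrightarrow> (e i * z) * (e i * y) = e i"
    using field nonzero by blast
  then obtain w where w: "\<And>i. i < n \<Longrightarrow> (e i * z) * (e i * w i) = e i"
    by (metis choice)
  have "z * (e i * w i) = e i" if "i < n" for i
  proof -
    have "(e i * z) * (e i * w i) = z * ((e i * e i) * w i)"
      by (simp add: comm[of "e i" z] mult.assoc)
    then show ?thesis
      using w[OF that] idem[OF that] by simp
  qed
  then have "z * (\<Sum>i<n. e i * w i) = 1"
    using sum_one by (simp add: sum_distrib_left)
  then show ?thesis
    using comm[of z] by (auto simp: units_def)
qed

lemma bij_field_hom_minus_one:
  fixes \<phi> :: "'k::field \<Rightarrow> 'b::field"
  assumes "bij \<phi>" "\<forall>x y. \<phi> (x + y) = \<phi> x + \<phi> y \<and> \<phi> (x * y) = \<phi> x * \<phi> y"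
  shows "\<phi> (- 1) = - 1"
proof -
  have add: "\<phi> (x + y) = \<phi> x + \<phi> y" and mult: "\<phi> (x * y) = \<phi> x * \<phi> y" for x y
    using assms(2) by blast+
  have "\<phi> 0 + \<phi> 0 = \<phi> 0 + 0"
    using add[of 0 0] by simp
  then have "\<phi> 0 = 0"
    by (rule add_left_imp_eq)
  moreover have "\<phi> 1 \<noteq> \<phi> 0"
    using inj_eq[OF bij_is_inj[OF assms(1)], of 1 0] by simp
  ultimately have "\<phi> 1 = 1"
    using mult[of 1 1] by simp
  then have "1 + \<phi> (- 1) = 0"
    using add[of 1 "- 1"] \<open>\<phi> 0 = 0\<close> by simp
  then show ?thesis
    by (simp add: eq_neg_iff_add_eq_0 add.commute)
qed

locale complete_ring_norm =
  fixes N :: "'a::ring_1 \<Rightarrow> real"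
  assumes norm_eq_zero_iff: "N x = 0 \<longleftrightarrow> x = 0"
    and norm_triangle: "N (x + y) \<le> N x + N y"
    and norm_minus: "N (- x) = N x"
    and norm_mult_le: "N (x * y) \<le> N x * N y"
    and norm_complete: "\<And>X :: nat \<Rightarrow> 'a. \<forall>e>0. \<exists>M. \<forall>m\<ge>M. \<forall>n\<ge>M. N (X m - X n) < e \<Longrightarrow>
                          \<exists>L. \<forall>e>0. \<exists>M. \<forall>n\<ge>M. N (X n - L) < e"
begin

lemma norm_nonneg: "0 \<le> N x"
  using norm_triangle[of x "- x"] norm_minus[of x] norm_eq_zero_iff[of 0] by simp

lemma norm_minus_commute: "N (x - y) = N (y - x)"
  using norm_minus[of "x - y"] by simp

lemma norm_zero [simp]: "N 0 = 0"
  by (simp add: norm_eq_zero_iff)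

lemma norm_sum_le: "N (\<Sum>i\<in>I. f i) \<le> (\<Sum>i\<in>I. N (f i))"
proof (induction I rule: infinite_finite_induct)
  case (insert i I)
  then show ?case using norm_triangle[of "f i" "\<Sum>i\<in>I. f i"] by simp
qed simp_all

lemma norm_power_le: "N (x ^ n) \<le> N 1 * N x ^ n"
proof (induction n)
  case (Suc n)
  have "N (x ^ Suc n) \<le> N (x ^ n) * N x"
    unfolding power_Suc2 by (rule norm_mult_le)
  also have "\<dots> \<le> N 1 * N x ^ n * N x"
    using Suc norm_nonneg[of x] by (rule mult_right_mono)
  finally show ?case by (simp only: power_Suc2 mult.assoc)
qed simp

lemma norm_geometric_tail:
  assumes "N x < 1" "m \<le> n"
  shows "N ((\<Sum>i<n. x ^ i) - (\<Sum>i<m. x ^ i)) \<le> N 1 * N x ^ m / (1 - N x)"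
proof -
  have "(\<Sum>i<n. x ^ i) - (\<Sum>i<m. x ^ i) = (\<Sum>i\<in>{m..<n}. x ^ i)"
    using assms(2) by (simp add: sum_diff_nat_ivl lessThan_atLeast0)
  then have "N ((\<Sum>i<n. x ^ i) - (\<Sum>i<m. x ^ i)) \<le> (\<Sum>i\<in>{m..<n}. N (x ^ i))"
    by (simp add: norm_sum_le)
  also have "\<dots> \<le> (\<Sum>i\<in>{m..<n}. N 1 * N x ^ i)"
    by (intro sum_mono norm_power_le)
  also have "\<dots> = N 1 * ((\<Sum>i<n. N x ^ i) - (\<Sum>i<m. N x ^ i))"
    using assms(2) by (simp add: sum_distrib_left sum_diff_nat_ivl lessThan_atLeast0)
  also have "\<dots> = N 1 * (N x ^ m - N x ^ n) / (1 - N x)"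
    using assms(1) by (simp add: sum_gp_strict flip: diff_divide_distrib)
  also have "\<dots> \<le> N 1 * N x ^ m / (1 - N x)"
    using assms(1) norm_nonneg[of x] norm_nonneg[of 1]
    by (intro divide_right_mono mult_left_mono) auto
  finally show ?thesis .
qed

lemma geometric_series_converges:
  assumes "N x < 1"
  obtains L where "(\<lambda>n. N ((\<Sum>i<n. x ^ i) - L)) \<longlonglongrightarrow> 0"
proof -
  define S where "S n = (\<Sum>i<n. x ^ i)" for n
  have "(\<lambda>n. N 1 * N x ^ n / (1 - N x)) \<longlonglongrightarrow> N 1 * 0 / (1 - N x)"
    using assms norm_nonneg[of x] by (intro tendsto_intros) auto
  then have tail_small: "\<forall>\<^sub>F n in sequentially. N 1 * N x ^ n / (1 - N x) < e" if "e > 0" for e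
    using that by (simp add: order_tendstoD(2))
  have "\<exists>M. \<forall>m\<ge>M. \<forall>n\<ge>M. N (S m - S n) < e" if e: "e > 0" for e
  proof -
    obtain M where M: "\<And>n. n \<ge> M \<Longrightarrow> N 1 * N x ^ n / (1 - N x) < e"
      using tail_small[OF e] by (auto simp: eventually_sequentially)
    have "N (S m - S n) < e" if "m \<ge> M" "n \<ge> M" for m n
      using norm_geometric_tail[OF assms, of m n] norm_geometric_tail[OF assms, of n m]
        M[of m] M[of n] that norm_minus_commute[of "S m" "S n"]
      by (cases "m \<le> n") (auto simp: S_def)
    then show ?thesis by blast
  qed
  then obtain L where "\<forall>e>0. \<exists>M. \<forall>n\<ge>M. N (S n - L) < e"
    using norm_complete[of S] by blast
  then have "(\<lambda>n. N (S n - L)) \<longlonglongrightarrow> 0"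
    by (intro LIMSEQ_I) (simp add: norm_nonneg)
  then show ?thesis using that by (simp add: S_def)
qed

lemma one_minus_unit:
  assumes "N x < 1"
  shows "1 - x \<in> units"
proof -
  obtain L where L: "(\<lambda>n. N ((\<Sum>i<n. x ^ i) - L)) \<longlonglongrightarrow> 0"
    using geometric_series_converges[OF assms] .
  have bound_null: "(\<lambda>n. N w * N ((\<Sum>i<n. x ^ i) - L) + N 1 * N x ^ n) \<longlonglongrightarrow> 0" for w
    using tendsto_add[OF tendsto_mult_right_zero[OF L] tendsto_mult_right_zero[OF LIMSEQ_power_zero]]
      assms norm_nonneg[of x] by simp
  have vanishes: "z = 0" if "\<And>n. N z \<le> N w * N ((\<Sum>i<n. x ^ i) - L) + N 1 * N x ^ n" for z w
    using LIMSEQ_le_const[OF bound_null[of w]] that norm_nonneg[of z] norm_eq_zero_iff[of z]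
    by (meson antisym)
  have remainder_bound: "N (w * (L - (\<Sum>i<n. x ^ i)) - x ^ n)
      \<le> N w * N ((\<Sum>i<n. x ^ i) - L) + N 1 * N x ^ n"
    "N ((L - (\<Sum>i<n. x ^ i)) * w - x ^ n)
      \<le> N w * N ((\<Sum>i<n. x ^ i) - L) + N 1 * N x ^ n" for w n
  proof -
    have "N (a - x ^ n) \<le> N a + N 1 * N x ^ n" for a
      using norm_triangle[of a "- (x ^ n)"] norm_minus[of "x ^ n"] norm_power_le[of x n] by simp
    moreover have "N (w * (L - (\<Sum>i<n. x ^ i))) \<le> N w * N ((\<Sum>i<n. x ^ i) - L)"
      "N ((L - (\<Sum>i<n. x ^ i)) * w) \<le> N w * N ((\<Sum>i<n. x ^ i) - L)"
      using norm_mult_le[of w "L - (\<Sum>i<n. x ^ i)"] norm_mult_le[of "L - (\<Sum>i<n. x ^ i)" w]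
        norm_minus_commute[of L "\<Sum>i<n. x ^ i"]
      by (simp_all add: mult.commute)
    ultimately show "N (w * (L - (\<Sum>i<n. x ^ i)) - x ^ n)
        \<le> N w * N ((\<Sum>i<n. x ^ i) - L) + N 1 * N x ^ n"
      "N ((L - (\<Sum>i<n. x ^ i)) * w - x ^ n)
        \<le> N w * N ((\<Sum>i<n. x ^ i) - L) + N 1 * N x ^ n"
      by (meson add_right_mono order_trans)+
  qed
  have "(1 - x) * L - 1 = (1 - x) * (L - (\<Sum>i<n. x ^ i)) - x ^ n" for n
    using one_minus_mult_geometric_sum(1)[of x n] by (simp add: algebra_simps)
  then have "(1 - x) * L - 1 = 0"
    by (metis vanishes remainder_bound(1))
  moreover have "L * (1 - x) - 1 = (L - (\<Sum>i<n. x ^ i)) * (1 - x) - x ^ n" for n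
    using one_minus_mult_geometric_sum(2)[of x n] by (simp add: algebra_simps)
  then have "L * (1 - x) - 1 = 0"
    by (metis vanishes remainder_bound(2))
  ultimately show ?thesis
    by (intro units_if_left_right_inverse[of _ L L]) simp_all
qed

end

lemma (in vector_space) independent_if_span_eq_card_le:
  assumes "independent B" "finite C" "span C = span B" "card C \<le> card B"
  shows "independent C"
proof
  assume "dependent C"
  then obtain a where a: "a \<in> C" "a \<in> span (C - {a})"
    by (auto simp: dependent_def)
  then have "C \<subseteq> span (C - {a})"
    using span_base[of _ "C - {a}"] by blast
  then have "B \<subseteq> span (C - {a})"
    using assms(3) span_superset[of B] span_minimal[OF _ subspace_span] by blast
  then have "card B \<le> card (C - {a})"
    using independent_span_bound[OF _ assms(1)] assms(2) by blast
  moreover have "card (C - {a}) < card C"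
    using assms(2) a(1) by (rule card_Diff1_less)
  ultimately show False
    using assms(4) by simp
qed

locale unital_algebra = vector_space s for s :: "'k::field \<Rightarrow> 'a::ring_1 \<Rightarrow> 'a" +
  assumes scale_mult_left: "s c (x * y) = s c x * y"
    and scale_mult_right: "s c (x * y) = x * s c y"
begin

lemma scale_eq_scale_one_mult: "s c x = s c 1 * x"
  using scale_mult_left[of c 1 x] by simp

lemma scale_one_mult_commute: "s c 1 * x = x * s c 1"
  using scale_mult_right[of c x 1] scale_eq_scale_one_mult[of c x] by simp

lemma scale_one_mult_scale_one: "s c 1 * s d 1 = s (c * d) 1"
  by (metis scale_eq_scale_one_mult scale_scale)

lemma scale_one_power: "s c 1 ^ n = s (c ^ n) 1"
  by (induction n) (simp_all add: scale_one_mult_scale_one)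

lemma scale_one_unit:
  assumes "c \<noteq> 0"
  shows "s c 1 \<in> units"
  using assms by (intro units_if_left_right_inverse[of _ "s (inverse c) 1" "s (inverse c) 1"])
    (simp_all add: scale_one_mult_scale_one)

lemma scale_unit:
  assumes "c \<noteq> 0" "x \<in> units"
  shows "s c x \<in> units"
  unfolding scale_eq_scale_one_mult[of c x] using scale_one_unit[OF assms(1)] assms(2) by (rule units_mult)

definition lines_meet_units :: bool where
  "lines_meet_units \<longleftrightarrow> (\<forall>y. \<exists>t. t \<noteq> 0 \<and> 1 + s t y \<in> units)"

lemma lines_through_unit_meet_units:
  assumes "lines_meet_units" "u \<in> units"
  obtains t where "t \<noteq> 0" "u + s t v \<in> units"
proof -
  obtain u' where u': "u * u' = 1" "u' * u = 1"
    using assms(2) by (auto simp: units_def)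
  obtain t where t: "t \<noteq> 0" "1 + s t (u' * v) \<in> units"
    using assms(1) by (auto simp: lines_meet_units_def)
  have "u * (1 + s t (u' * v)) = u + s t v"
    by (simp add: distrib_left u' flip: scale_mult_right mult.assoc)
  then show ?thesis
    using that t units_mult[OF assms(2) t(2)] by metis
qed

lemma span_has_basis_of_units:
  assumes "lines_meet_units" "finite A" "u \<in> A" "u \<in> units"
  shows "\<exists>B. B \<subseteq> units \<and> independent B \<and> span B = span A"
proof -
  have "u \<noteq> 0"
    using assms(4) by (auto simp: units_def)
  then obtain B where B: "u \<in> B" "B \<subseteq> A" "independent B" "A \<subseteq> span B"
    using maximal_independent_subset_extend[of "{u}" A] assms(3) by (auto simp: independent_insert)
  have "\<forall>v. \<exists>t. t \<noteq> 0 \<and> u + s t v \<in> units"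
    using lines_through_unit_meet_units[OF assms(1,4)] by metis
  then obtain T where T: "\<And>v. T v \<noteq> 0" "\<And>v. u + s (T v) v \<in> units"
    by metis
  define B' where "B' = (\<lambda>v. if v = u then u else u + s (T v) v) ` B"
  have "B' \<subseteq> units"
    using T(2) assms(4) by (auto simp: B'_def)
  moreover have "B' \<subseteq> span B"
    using B(1) by (auto simp: B'_def intro: span_add span_scale span_base)
  moreover have "B \<subseteq> span B'"
  proof
    fix v assume "v \<in> B"
    then have "u \<in> span B'" "u + s (T v) v \<in> span B' \<or> v = u"
      using B(1) by (auto simp: B'_def intro!: span_base)
    moreover have "v = s (inverse (T v)) ((u + s (T v) v) - u)"
      using T(1)[of v] by (simp add: scale_right_diff_distrib)
    ultimately show "v \<in> span B'"
      by (metis span_diff span_scale)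
  qed
  ultimately have "span B' = span B"
    by (simp add: span_eq)
  also have "span B = span A"
    unfolding span_eq using B(2,4) span_superset by blast
  finally have "span B' = span A" .
  moreover have "finite B"
    using B(2) assms(2) finite_subset by blast
  then have "finite B'" "card B' \<le> card B"
    unfolding B'_def by (simp, rule card_image_le)
  ultimately show ?thesis
    using \<open>B' \<subseteq> units\<close> independent_if_span_eq_card_le[OF B(3)] \<open>span B' = span B\<close> by blast
qed

lemma scalar_sub_unit_if_annihilating:
  assumes "(\<Sum>i\<le>m. s (c i) (y ^ i)) = 0" "(\<Sum>i\<le>m. c i * l ^ i) \<noteq> 0"
  shows "y - s l 1 \<in> units"
proof -
  define p where "p = (\<Sum>i\<le>m. c i * l ^ i)"
  have "\<forall>i. \<exists>q r. y ^ i - s l 1 ^ i = (y - s l 1) * q \<and> y ^ i - s l 1 ^ i = r * (y - s l 1)"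
    using power_diff_power_factors scale_one_mult_commute by metis
  then obtain q r where qr: "\<And>i. y ^ i - s l 1 ^ i = (y - s l 1) * q i"
    "\<And>i. y ^ i - s l 1 ^ i = r i * (y - s l 1)"
    by metis
  \<comment> \<open>As p(y) = 0, the sum below is p(y) - p(l), divisible by y - l on either side.\<close>
  have "(\<Sum>i\<le>m. s (c i) (y ^ i - s l 1 ^ i)) = - s p 1"
    using assms(1) by (simp add: scale_one_power scale_right_diff_distrib sum_subtractf
        p_def scale_sum_left)
  then have "(y - s l 1) * (\<Sum>i\<le>m. s (c i) (q i)) = - s p 1"
    "(\<Sum>i\<le>m. s (c i) (r i)) * (y - s l 1) = - s p 1"
    by (simp_all add: sum_distrib_left qr(1) flip: scale_mult_right,
        simp_all add: sum_distrib_right qr(2) flip: scale_mult_left)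
  moreover have "- s p 1 * s (- inverse p) 1 = 1" "s (- inverse p) 1 * - s p 1 = 1"
    using assms(2) by (simp_all add: scale_one_mult_scale_one p_def)
  ultimately have "(y - s l 1) * ((\<Sum>i\<le>m. s (c i) (q i)) * s (- inverse p) 1) = 1"
    "(s (- inverse p) 1 * (\<Sum>i\<le>m. s (c i) (r i))) * (y - s l 1) = 1"
    by (metis mult.assoc)+
  then show ?thesis
    by (rule units_if_left_right_inverse)
qed

lemma annihilating_coefficients_exist:
  assumes "finite_dimensional_vector_space s Bs"
  obtains c where "\<exists>i\<le>card Bs. c i \<noteq> 0" "(\<Sum>i\<le>card Bs. s (c i) (y ^ i)) = 0"
proof -
  interpret fd: finite_dimensional_vector_space s Bs
    by (rule assms)
  define m where "m = card Bs"
  show ?thesis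
  proof (cases "inj_on (\<lambda>i. y ^ i) {..m}")
    case True
    define P where "P = (\<lambda>i. y ^ i) ` {..m}"
    have "card P = Suc m"
      unfolding P_def by (simp add: card_image[OF True])
    moreover have "card P \<le> m" if "independent P"
      using fd.independent_bound_general[OF that] fd.dim_subset_UNIV[of P]
      unfolding fd.dimension_def m_def by linarith
    ultimately have "dependent P"
      by linarith
    then obtain u where u: "\<exists>v\<in>P. u v \<noteq> 0" "(\<Sum>v\<in>P. s (u v) v) = 0"
      using dependent_finite[of P] by (auto simp: P_def)
    have "(\<Sum>i\<le>m. s (u (y ^ i)) (y ^ i)) = 0"
      using u(2) sum.reindex[OF True, of "\<lambda>v. s (u v) v"] by (simp add: P_def)
    moreover have "\<exists>i\<le>m. u (y ^ i) \<noteq> 0"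
      using u(1) by (auto simp: P_def)
    ultimately show ?thesis
      using that[of "\<lambda>i. u (y ^ i)"] by (simp add: m_def)
  next
    case False
    then obtain i j where ij: "i \<le> m" "j \<le> m" "i \<noteq> j" "y ^ i = y ^ j"
      by (auto simp: inj_on_def)
    define c where "c k = (if k = i then 1 else if k = j then -1 else 0 :: 'k)" for k
    have "(\<Sum>k\<le>m. s (c k) (y ^ k)) = s (c i) (y ^ i) + s (c j) (y ^ j)"
      using ij by (simp add: c_def sum.delta' if_distrib[of "\<lambda>c. s c _"] sum.If_cases)
    also have "\<dots> = 0"
      using ij by (simp add: c_def)
    finally have "(\<Sum>k\<le>m. s (c k) (y ^ k)) = 0" .
    moreover have "\<exists>k\<le>m. c k \<noteq> 0"
      using ij(1) by (auto simp: c_def)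
    ultimately show ?thesis
      using that[of c] by (simp add: m_def)
  qed
qed

lemma lines_meet_units_if_finite_dimensional:
  assumes "infinite (UNIV :: 'k set)" "finite_dimensional_vector_space s Bs"
  shows lines_meet_units
  unfolding lines_meet_units_def
proof
  fix y
  obtain c where c: "\<exists>i\<le>card Bs. c i \<noteq> 0" "(\<Sum>i\<le>card Bs. s (c i) (y ^ i)) = 0"
    using annihilating_coefficients_exist[OF assms(2)] .
  define p where "p = (\<Sum>i\<le>card Bs. monom (c i) i)"
  have "p \<noteq> 0"
    using c(1) by (auto simp: p_def poly_eq_iff coeff_sum)
  then have "finite (insert 0 {l. poly p l = 0})"
    by (simp add: poly_roots_finite)
  then obtain l where l: "l \<noteq> 0" "poly p l \<noteq> 0"
    using ex_new_if_finite[OF assms(1)] by blast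
  then have "y - s l 1 \<in> units"
    using c(2) by (intro scalar_sub_unit_if_annihilating) (simp_all add: p_def poly_sum poly_monom)
  moreover have "s (- inverse l) (y - s l 1) = 1 + s (- inverse l) y"
    using l(1) by (simp add: scale_right_diff_distrib)
  ultimately show "\<exists>t. t \<noteq> 0 \<and> 1 + s t y \<in> units"
    using l(1) scale_unit[of "- inverse l"] by (metis inverse_nonzero_iff_nonzero neg_equal_0_iff_equal)
qed

lemma line_point_annihilated_unique:
  assumes "e \<noteq> 0" "e * (1 + s a y) = 0" "e * (1 + s b y) = 0"
  shows "a = b"
proof (rule ccontr)
  assume "a \<noteq> b"
  have "e + s a (e * y) = 0" "e + s b (e * y) = 0"
    using assms(2,3) by (simp_all add: distrib_left scale_mult_right)
  then have "s a (e * y) - s b (e * y) = 0"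
    by (metis add_left_cancel diff_self)
  then have "s (a - b) (e * y) = 0"
    by (simp add: scale_left_diff_distrib)
  then have "e * y = 0"
    using \<open>a \<noteq> b\<close> by simp
  then show False
    using \<open>e + s a (e * y) = 0\<close> assms(1) by simp
qed

lemma lines_meet_units_if_fin_prod_field_ext:
  assumes "infinite (UNIV :: 'k set)" "fin_prod_field_ext s"
  shows lines_meet_units
  unfolding lines_meet_units_def
proof
  fix y
  obtain n and e :: "nat \<Rightarrow> 'a" where comm: "\<And>x y :: 'a. x * y = y * x"
    and sum_one: "(\<Sum>i<n. e i) = 1"
    and components: "\<And>i. i < n \<Longrightarrow> e i * e i = e i \<and> e i \<noteq> 0 \<and>
         (\<forall>x. e i * x \<noteq> 0 \<longrightarrow> (\<exists>y. (e i * x) * (e i * y) = e i))"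
    using assms(2) unfolding fin_prod_field_ext_def by blast
  define bad where "bad i = {t. e i * (1 + s t y) = 0}" for i
  have "finite (bad i)" if "i < n" for i
  proof (cases "bad i = {}")
    case False
    then obtain a where "a \<in> bad i"
      by blast
    moreover have "e i \<noteq> 0"
      using components[OF that] by blast
    ultimately have "bad i \<subseteq> {a}"
      using line_point_annihilated_unique[of "e i" a y] unfolding bad_def by blast
    then show ?thesis
      by (rule finite_subset) simp
  qed simp
  then have "finite (insert 0 (\<Union>i<n. bad i))"
    by simp
  then obtain t where t: "t \<notin> insert 0 (\<Union>i<n. bad i)"
    using ex_new_if_finite[OF assms(1)] by blast
  have "1 + s t y \<in> units"
  proof (rule unit_if_nonzero_idempotent_components[OF comm sum_one])
    show "\<And>i. i < n \<Longrightarrow> e i * e i = e i"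
      "\<And>i x. i < n \<Longrightarrow> e i * x \<noteq> 0 \<Longrightarrow> \<exists>y. e i * x * (e i * y) = e i"
      using components by blast+
    show "\<And>i. i < n \<Longrightarrow> e i * (1 + s t y) \<noteq> 0"
      using t by (auto simp: bad_def)
  qed
  then show "\<exists>t. t \<noteq> 0 \<and> 1 + s t y \<in> units"
    using t by blast
qed

lemma complete_ring_norm_if_banach_alg_norm:
  assumes "banach_alg_norm s a N" "a (- 1) = 1"
  shows "complete_ring_norm N"
proof
  fix x
  have "N (s (- 1) x) = a (- 1) * N x"
    using assms(1) unfolding banach_alg_norm_def by blast
  then show "N (- x) = N x"
    using assms(2) by simp
qed (use assms(1) in \<open>simp_all add: banach_alg_norm_def\<close>)

lemma lines_meet_units_if_banach_alg_norm:
  assumes "banach_alg_norm s a N" "a (- 1) = 1" "\<And>r. r > 0 \<Longrightarrow> \<exists>t. a t = r"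
  shows lines_meet_units
  unfolding lines_meet_units_def
proof
  fix y
  interpret complete_ring_norm N
    using assms(1,2) by (rule complete_ring_norm_if_banach_alg_norm)
  have scale_norm: "N (s c x) = a c * N x" for c x
    using assms(1) by (simp add: banach_alg_norm_def)
  have "1 / (N y + 1) > 0"
    using norm_nonneg[of y] by simp
  then obtain t where t: "a t = 1 / (N y + 1)"
    using assms(3) by blast
  have "t \<noteq> 0"
  proof
    assume "t = 0"
    then have "a t * N 1 = 0"
      using scale_norm[of 0 1] by simp
    then show False
      using t norm_nonneg[of y] norm_eq_zero_iff[of 1] by simp
  qed
  have "N (s t y) = N y / (N y + 1)"
    using t by (simp add: scale_norm)
  also have "\<dots> < 1"
    using norm_nonneg[of y] by simp
  finally have "N (s t y) < 1" .
  then have "1 + s (- t) y \<in> units"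
    using one_minus_unit by simp
  then show "\<exists>t. t \<noteq> 0 \<and> 1 + s t y \<in> units"
    using \<open>t \<noteq> 0\<close> neg_equal_0_iff_equal by blast
qed

lemma lines_meet_units_if_banach_over_R_or_C:
  assumes "banach_over_R_or_C s"
  shows lines_meet_units
  using assms unfolding banach_over_R_or_C_def
proof (elim disjE exE conjE)
  fix \<phi> :: "'k \<Rightarrow> real" and N
  assume \<phi>: "bij \<phi>" "\<forall>x y. \<phi> (x + y) = \<phi> x + \<phi> y \<and> \<phi> (x * y) = \<phi> x * \<phi> y"
    and norm: "banach_alg_norm s (\<lambda>c. \<bar>\<phi> c\<bar>) N"
  show lines_meet_units
  proof (rule lines_meet_units_if_banach_alg_norm[OF norm])
    show "\<bar>\<phi> (- 1)\<bar> = 1"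
      using bij_field_hom_minus_one[OF \<phi>] by simp
    fix r :: real
    assume "r > 0"
    obtain t where "r = \<phi> t"
      using surjD[OF bij_is_surj[OF \<phi>(1)]] by blast
    with \<open>r > 0\<close> show "\<exists>t. \<bar>\<phi> t\<bar> = r"
      by (intro exI[of _ t]) simp
  qed
next
  fix \<phi> :: "'k \<Rightarrow> complex" and N
  assume \<phi>: "bij \<phi>" "\<forall>x y. \<phi> (x + y) = \<phi> x + \<phi> y \<and> \<phi> (x * y) = \<phi> x * \<phi> y"
    and norm: "banach_alg_norm s (\<lambda>c. cmod (\<phi> c)) N"
  show lines_meet_units
  proof (rule lines_meet_units_if_banach_alg_norm[OF norm])
    show "cmod (\<phi> (- 1)) = 1"
      using bij_field_hom_minus_one[OF \<phi>] by simp
    fix r :: real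
    assume "r > 0"
    obtain t where "complex_of_real r = \<phi> t"
      using surjD[OF bij_is_surj[OF \<phi>(1)]] by blast
    with \<open>r > 0\<close> show "\<exists>t. cmod (\<phi> t) = r"
      by (intro exI[of _ t]) (metis norm_of_real abs_of_pos)
  qed
qed

lemma lines_meet_units_if_H_s:
  assumes "infinite (UNIV :: 'k set)" "H_s s"
  shows lines_meet_units
  using assms(2) unfolding H_s_def fin_dim_alg_def
proof (elim disjE exE)
  show "finite_dimensional_vector_space s Bs \<Longrightarrow> lines_meet_units" for Bs
    using assms(1) by (rule lines_meet_units_if_finite_dimensional)
  show "fin_prod_field_ext s \<Longrightarrow> lines_meet_units"
    using assms(1) by (rule lines_meet_units_if_fin_prod_field_ext)
qed (rule lines_meet_units_if_banach_over_R_or_C)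

end

lemma unital_algebra_if_k_algebra:
  assumes "k_algebra s"
  shows "unital_algebra s"
  using assms unfolding k_algebra_def unital_algebra_def unital_algebra_axioms_def by blast

theorem proposition2p6:
  fixes s :: "'k::field \<Rightarrow> 'a::ring_1 \<Rightarrow> 'a" and A :: "'a set"
  assumes "infinite (UNIV :: 'k set)"
    and "k_algebra s"
    and "H_s s"
    and "finite A"
    and "A \<inter> units \<noteq> {}"
  shows "\<exists>B. B \<subseteq> units \<and> module.independent s B \<and>
             module.span s B = module.span s A"
proof -
  interpret unital_algebra s
    using assms(2) by (rule unital_algebra_if_k_algebra)
  obtain u where "u \<in> A" "u \<in> units"
    using assms(5) by blast
  then show ?thesis
    using span_has_basis_of_units[OF lines_meet_units_if_H_s[OF assms(1,3)] assms(4)] by blast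
qed

end
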